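(* Let $G$ be a group with a BN-pair $(B,N)$ carrying two group topologies $\mathcal{S}\subseteq\mathcal{T}$, and suppose $B\in\mathcal{S}$ (i.e. $B$ is $\mathcal{S}$-open). Let $\widehat{\mathrm{Id}}:\widehat{(G,\mathcal{T})}\to\widehat{(G,\mathcal{S})}$ be the unique continuous extension of the identity, and $\widehat{\mathrm{Id}_B}:\widehat{(B,\mathcal{T}_B)}\to\widehat{(B,\mathcal{S}_B)}$ the analogous map for the restricted topologies on $B$. Then $\ker\widehat{\mathrm{Id}}=\ker\widehat{\mathrm{Id}_B}$.
   Context: Completions are right uniform completions (minimal Cauchy filters), which are monoids; the kernel of a monoid homomorphism means the preimage of $1$. $\mathcal{T}_B,\mathcal{S}_B$ are the subspace topologies on $B$, and $\widehat{(B,\mathcal{T}_B)}$ is identified with the closure of $B$ in $\widehat{(G,\mathcal{T})}$. *)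

theory Defs
  imports "HOL-Analysis.Analysis" "HOL-Algebra.Algebra"
begin

text \<open>The Weyl group W = N/H (H = B \<inter> N) is
  generated by a set of involutions, given here by a set R of representatives in N
  (r \<notin> H, r r \<in> H, and R \<union> H generates N).\<close>
definition BN_pair :: "('a, 'b) monoid_scheme \<Rightarrow> 'a set \<Rightarrow> 'a set \<Rightarrow> bool" where
  "BN_pair G B N \<longleftrightarrow>
     subgroup B G \<and> subgroup N G \<and>
     generate G (B \<union> N) = carrier G \<and>
     normal (B \<inter> N) (G\<lparr>carrier := N\<rparr>) \<and>
     (\<exists>R. R \<subseteq> N \<and>
        (\<forall>r\<in>R. r \<notin> B \<inter> N \<and> r \<otimes>\<^bsub>G\<^esub> r \<in> B \<inter> N) \<and>
        generate G (R \<union> (B \<inter> N)) = N \<and>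
        (\<forall>r\<in>R. \<forall>n\<in>N.
           set_mult G (r <#\<^bsub>G\<^esub> B) {n} \<subseteq>
             set_mult G (B #>\<^bsub>G\<^esub> n) B \<union> set_mult G (B #>\<^bsub>G\<^esub> (r \<otimes>\<^bsub>G\<^esub> n)) B) \<and>
        (\<forall>r\<in>R. (r <#\<^bsub>G\<^esub> B) #>\<^bsub>G\<^esub> r \<noteq> B))"

definition group_topology :: "('a, 'b) monoid_scheme \<Rightarrow> 'a topology \<Rightarrow> bool" where
  "group_topology G T \<longleftrightarrow>
     topspace T = carrier G \<and>
     continuous_map (prod_topology T T) T (\<lambda>(x, y). x \<otimes>\<^bsub>G\<^esub> y) \<and>
     continuous_map T T (\<lambda>x. inv\<^bsub>G\<^esub> x)"

text \<open>Cauchy filters for the right uniformity (entourages {(x,y). x * inverse(y) \<in> U},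
  U a neighbourhood of 1).  Filters on the carrier are filters on the ambient type
  that eventually lie in the carrier.\<close>
definition right_cauchy :: "('a, 'b) monoid_scheme \<Rightarrow> 'a topology \<Rightarrow> 'a filter \<Rightarrow> bool" where
  "right_cauchy G T F \<longleftrightarrow>
     F \<noteq> bot \<and> eventually (\<lambda>x. x \<in> carrier G) F \<and>
     (\<forall>U. openin T U \<and> \<one>\<^bsub>G\<^esub> \<in> U \<longrightarrow>
        (\<exists>A. eventually (\<lambda>x. x \<in> A) F \<and>
             (\<forall>x\<in>A. \<forall>y\<in>A. x \<otimes>\<^bsub>G\<^esub> inv\<^bsub>G\<^esub> y \<in> U)))"

text \<open>Minimal Cauchy filters (in Isabelle's order, F \<le> F' means F is finer).\<close>
definition min_right_cauchy :: "('a, 'b) monoid_scheme \<Rightarrow> 'a topology \<Rightarrow> 'a filter \<Rightarrow> bool" where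
  "min_right_cauchy G T F \<longleftrightarrow>
     right_cauchy G T F \<and> (\<forall>F'. right_cauchy G T F' \<and> F \<le> F' \<longrightarrow> F' = F)"

definition completion :: "('a, 'b) monoid_scheme \<Rightarrow> 'a topology \<Rightarrow> 'a filter set" where
  "completion G T = {F. min_right_cauchy G T F}"

text \<open>The continuous extension of the identity to completions (for a coarser
  topology S): send F to the unique minimal S-Cauchy filter coarser than F.
  The same map, applied with T, realises the identification of the completion of a
  subgroup with the closure of the subgroup in the completion.\<close>
definition compl_map :: "('a, 'b) monoid_scheme \<Rightarrow> 'a topology \<Rightarrow> 'a filter \<Rightarrow> 'a filter" where
  "compl_map G S F = (THE F'. min_right_cauchy G S F' \<and> F \<le> F')"

text \<open>The identity element of the completion: image of 1 under the canonical embedding,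
  i.e. the neighbourhood filter of 1.\<close>
definition compl_one :: "('a, 'b) monoid_scheme \<Rightarrow> 'a topology \<Rightarrow> 'a filter" where
  "compl_one G S = nhdsin S \<one>\<^bsub>G\<^esub>"

definition ker_ext_id :: "('a, 'b) monoid_scheme \<Rightarrow> 'a topology \<Rightarrow> 'a topology \<Rightarrow> 'a filter set" where
  "ker_ext_id G T S = {F \<in> completion G T. compl_map G S F = compl_one G S}"

end

theory Submission
  imports Defs
begin

text \<open>Since \<open>B\<close> is
  \<open>\<S>\<close>-open, hence \<open>\<T>\<close>-open, a Cauchy filter coarser than a filter containing \<open>B\<close>
  contains \<open>B\<close> itself: it contains some \<open>C\<close> with \<open>C C\<inverse> \<subseteq> B\<close>, and \<open>C\<close> meets \<open>B\<close>.
  So the (minimal) Cauchy filters of \<open>B\<close> are exactly the (minimal) Cauchy filters of \<open>G\<close>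
  containing \<open>B\<close>, and the extensions of the identity agree on them. Every filter in
  either kernel contains \<open>B\<close>, because the kernel of the extension consists of filters
  finer than the \<open>\<S>\<close>-neighbourhood filter of \<open>\<one>\<close>. Finally, on minimal
  \<open>\<T>\<close>-Cauchy filters \<open>compl_map G \<T>\<close> is the identity, which realises the
  identification of the completion of \<open>B\<close> with a subset of that of \<open>G\<close>.\<close>

lemma continuous_map_group_mult:
  assumes "group_topology G S" "continuous_map Z S f" "continuous_map Z S g"
  shows "continuous_map Z S (\<lambda>z. f z \<otimes>\<^bsub>G\<^esub> g z)"
proof -
  have mult: "continuous_map (prod_topology S S) S (\<lambda>(x, y). x \<otimes>\<^bsub>G\<^esub> y)"
    using assms(1) by (simp add: group_topology_def)
  have "continuous_map Z (prod_topology S S) (\<lambda>z. (f z, g z))"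
    using assms(2,3) by (simp add: continuous_map_paired)
  from continuous_map_compose[OF this mult] show ?thesis
    by (simp add: o_def)
qed

lemma continuous_map_group_inv:
  assumes "group_topology G S" "continuous_map Z S f"
  shows "continuous_map Z S (\<lambda>z. inv\<^bsub>G\<^esub> f z)"
  using continuous_map_compose[OF assms(2), of S "\<lambda>x. inv\<^bsub>G\<^esub> x"] assms(1)
  by (simp add: group_topology_def o_def)

lemma right_cauchy_coarser_topology:
  "right_cauchy G T F \<Longrightarrow> \<forall>U. openin S U \<longrightarrow> openin T U \<Longrightarrow> right_cauchy G S F"
  unfolding right_cauchy_def by meson

lemma compl_map_min_right_cauchy:
  assumes "min_right_cauchy G T F"
  shows "compl_map G T F = F"
  unfolding compl_map_def
  by (rule the_equality) (use assms in \<open>auto simp: min_right_cauchy_def\<close>)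

lemma nhdsin_open_subtopology:
  assumes "openin Y B" "a \<in> B"
  shows "nhdsin (subtopology Y B) a = nhdsin Y a"
proof (rule filter_eqI)
  fix P
  have "a \<in> topspace Y" using assms openin_subset by blast
  moreover have "(\<exists>S. openin Y S \<and> a \<in> S \<and> (\<forall>x\<in>S. P x)) \<longleftrightarrow>
                 (\<exists>S. openin Y S \<and> S \<subseteq> B \<and> a \<in> S \<and> (\<forall>x\<in>S. P x))"
  proof
    assume "\<exists>S. openin Y S \<and> a \<in> S \<and> (\<forall>x\<in>S. P x)"
    then obtain S where "openin Y S" "a \<in> S" "\<forall>x\<in>S. P x" by blast
    with assms show "\<exists>S. openin Y S \<and> S \<subseteq> B \<and> a \<in> S \<and> (\<forall>x\<in>S. P x)"
      by (intro exI[of _ "S \<inter> B"]) auto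
  qed blast
  ultimately show "eventually P (nhdsin (subtopology Y B) a) \<longleftrightarrow> eventually P (nhdsin Y a)"
    using assms by (simp add: eventually_nhdsin openin_open_subtopology)
qed

text \<open>The filter generated by the sets \<open>U <#> A\<close>, \<open>U\<close> a neighbourhood of \<open>\<one>\<close> and
  \<open>A \<in> F\<close>; for a Cauchy filter \<open>F\<close> it is the minimal Cauchy filter coarser than \<open>F\<close>.\<close>
definition min_right_cauchy_of :: "('a, 'b) monoid_scheme \<Rightarrow> 'a topology \<Rightarrow> 'a filter \<Rightarrow> 'a filter"
  where "min_right_cauchy_of G S F =
    (INF (A, U) \<in> {(A, U). eventually (\<lambda>x. x \<in> A) F \<and> A \<subseteq> carrier G \<and> openin S U \<and> \<one>\<^bsub>G\<^esub> \<in> U}.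
       principal (U <#>\<^bsub>G\<^esub> A))"

context group
begin

lemma nhds_one_mult_mult_inv:
  assumes "group_topology G S" "openin S U" "\<one> \<in> U"
  obtains W where "openin S W" "\<one> \<in> W" "\<And>a b c. \<lbrakk>a \<in> W; b \<in> W; c \<in> W\<rbrakk> \<Longrightarrow> a \<otimes> b \<otimes> inv c \<in> U"
proof -
  let ?P = "prod_topology S (prod_topology S S)"
  let ?f = "\<lambda>p. fst p \<otimes> fst (snd p) \<otimes> inv (snd (snd p))"
  have "continuous_map ?P S (\<lambda>p. fst (snd p))" "continuous_map ?P S (\<lambda>p. snd (snd p))"
    using continuous_map_fst_of[OF continuous_map_snd] continuous_map_snd_of[OF continuous_map_snd]
    by (simp_all add: o_def)
  then have "continuous_map ?P S ?f"
    using continuous_map_fst[of S "prod_topology S S"]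
    by (intro continuous_map_group_mult[OF assms(1)] continuous_map_group_inv[OF assms(1)])
  then have pre: "openin ?P {p \<in> topspace ?P. ?f p \<in> U}"
    using assms(2) by (rule openin_continuous_map_preimage)
  have one: "(\<one>, \<one>, \<one>) \<in> {p \<in> topspace ?P. ?f p \<in> U}"
    using assms(1,3) by (simp add: group_topology_def)
  obtain U1 V where U1V: "openin S U1" "openin (prod_topology S S) V" "\<one> \<in> U1"
      "(\<one>, \<one>) \<in> V" "U1 \<times> V \<subseteq> {p \<in> topspace ?P. ?f p \<in> U}"
    using openin_prod_topology_alt[THEN iffD1, OF pre, rule_format, OF one] by blast
  obtain U2 U3 where U23: "openin S U2" "openin S U3" "\<one> \<in> U2" "\<one> \<in> U3" "U2 \<times> U3 \<subseteq> V"
    using openin_prod_topology_alt[THEN iffD1, OF U1V(2), rule_format, OF U1V(4)] by blast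
  show thesis
  proof (rule that[of "U1 \<inter> U2 \<inter> U3"])
    show "openin S (U1 \<inter> U2 \<inter> U3)" "\<one> \<in> U1 \<inter> U2 \<inter> U3"
      using U1V U23 by auto
    fix a b c assume "a \<in> U1 \<inter> U2 \<inter> U3" "b \<in> U1 \<inter> U2 \<inter> U3" "c \<in> U1 \<inter> U2 \<inter> U3"
    then have "(a, b, c) \<in> U1 \<times> V"
      using U23(5) by blast
    then show "a \<otimes> b \<otimes> inv c \<in> U"
      using U1V(5) by auto
  qed
qed

lemma eventually_min_right_cauchy_of:
  assumes "group_topology G S" "eventually (\<lambda>x. x \<in> carrier G) F"
  shows "eventually P (min_right_cauchy_of G S F) \<longleftrightarrow>
    (\<exists>A U. eventually (\<lambda>x. x \<in> A) F \<and> A \<subseteq> carrier G \<and> openin S U \<and> \<one> \<in> U \<and>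
           (\<forall>x \<in> U <#> A. P x))"
proof -
  let ?I = "{(A, U). eventually (\<lambda>x. x \<in> A) F \<and> A \<subseteq> carrier G \<and> openin S U \<and> \<one> \<in> U}"
  have "topspace S = carrier G"
    using assms(1) by (simp add: group_topology_def)
  then have "(carrier G, carrier G) \<in> ?I"
    using assms(2) openin_topspace[of S] by simp
  moreover have "\<exists>k\<in>?I. principal ((\<lambda>(A, U). U <#> A) k) \<le>
      inf (principal ((\<lambda>(A, U). U <#> A) i)) (principal ((\<lambda>(A, U). U <#> A) j))"
    if "i \<in> ?I" "j \<in> ?I" for i j
  proof -
    obtain A1 U1 A2 U2 where "i = (A1, U1)" "j = (A2, U2)" by fastforce
    moreover have "U1 \<inter> U2 <#> A1 \<inter> A2 \<subseteq> (U1 <#> A1) \<inter> (U2 <#> A2)"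
      by (simp add: mono_set_mult)
    ultimately show ?thesis
      using that by (intro bexI[of _ "(A1 \<inter> A2, U1 \<inter> U2)"]) (auto simp: eventually_conj_iff)
  qed
  ultimately show ?thesis
    unfolding min_right_cauchy_of_def
    by (subst eventually_INF_base) (auto simp: eventually_principal)
qed

lemma le_min_right_cauchy_of:
  assumes "group_topology G S" "eventually (\<lambda>x. x \<in> carrier G) F"
  shows "F \<le> min_right_cauchy_of G S F"
proof (rule filter_leI)
  fix P assume "eventually P (min_right_cauchy_of G S F)"
  then obtain A U where A: "eventually (\<lambda>x. x \<in> A) F" "A \<subseteq> carrier G"
      and U: "\<one> \<in> U" and P: "\<forall>x \<in> U <#> A. P x"
    using eventually_min_right_cauchy_of[OF assms] by blast
  have AU: "A \<subseteq> U <#> A"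
  proof
    fix x assume "x \<in> A"
    with A(2) U have "\<one> \<otimes> x \<in> U <#> A" unfolding set_mult_def by blast
    with \<open>x \<in> A\<close> A(2) show "x \<in> U <#> A" by auto
  qed
  from A(1) show "eventually P F"
    by (rule eventually_mono) (use AU P in blast)
qed

text \<open>\<open>F'\<close> contains some \<open>C\<close> with \<open>C C\<inverse> \<subseteq> U\<close>, and \<open>C\<close> meets \<open>A\<close>, so \<open>C \<subseteq> U <#> A\<close>.\<close>
lemma right_cauchy_eventually_set_mult:
  assumes "right_cauchy G S F'" "F \<le> F'" "F \<noteq> bot" "eventually (\<lambda>x. x \<in> A) F"
    and "openin S U" "\<one> \<in> U"
  shows "eventually (\<lambda>x. x \<in> U <#> A) F'"
proof -
  obtain C where C: "eventually (\<lambda>x. x \<in> C) F'" "\<forall>x\<in>C. \<forall>y\<in>C. x \<otimes> inv y \<in> U"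
    using assms(1,5,6) unfolding right_cauchy_def by blast
  have CG: "eventually (\<lambda>x. x \<in> C \<inter> carrier G) F'"
    using C(1) assms(1) by (auto simp: right_cauchy_def eventually_conj_iff)
  then have "eventually (\<lambda>x. x \<in> C \<inter> carrier G \<and> x \<in> A) F"
    using assms(2,4) filter_leD eventually_conj by blast
  then obtain c where c: "c \<in> C" "c \<in> carrier G" "c \<in> A"
    using eventually_happens'[OF assms(3)] by blast
  have "x \<in> U <#> A" if "x \<in> C \<inter> carrier G" for x
  proof -
    have "x = (x \<otimes> inv c) \<otimes> c" using that c by (simp add: m_assoc)
    moreover have "x \<otimes> inv c \<in> U" using C(2) that c by blast
    ultimately show ?thesis using c(3) unfolding set_mult_def by blast
  qed
  with CG show ?thesis by (simp add: eventually_mono)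
qed

lemma right_cauchy_le_min_right_cauchy_of:
  assumes "group_topology G S" "right_cauchy G S F" "right_cauchy G S F'" "F \<le> F'"
  shows "F' \<le> min_right_cauchy_of G S F"
proof (rule filter_leI)
  have F: "F \<noteq> bot" "eventually (\<lambda>x. x \<in> carrier G) F"
    using assms(2) by (auto simp: right_cauchy_def)
  fix P assume "eventually P (min_right_cauchy_of G S F)"
  then obtain A U where "eventually (\<lambda>x. x \<in> A) F" "openin S U" "\<one> \<in> U"
      and P: "\<forall>x \<in> U <#> A. P x"
    using eventually_min_right_cauchy_of[OF assms(1) F(2)] by blast
  with right_cauchy_eventually_set_mult[OF assms(3,4) F(1)]
  have "eventually (\<lambda>x. x \<in> U <#> A) F'" by blast
  then show "eventually P F'"
    by (rule eventually_mono) (use P in blast)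
qed

lemma set_mult_mult_inv_mem:
  assumes "W \<subseteq> carrier G" "A \<subseteq> carrier G"
    and "\<And>a b c. \<lbrakk>a \<in> W; b \<in> W; c \<in> W\<rbrakk> \<Longrightarrow> a \<otimes> b \<otimes> inv c \<in> U"
    and "\<And>x y. \<lbrakk>x \<in> A; y \<in> A\<rbrakk> \<Longrightarrow> x \<otimes> inv y \<in> W"
    and "x \<in> W <#> A" "y \<in> W <#> A"
  shows "x \<otimes> inv y \<in> U"
proof -
  obtain w1 a1 w2 a2 where xy: "x = w1 \<otimes> a1" "y = w2 \<otimes> a2" "w1 \<in> W" "w2 \<in> W" "a1 \<in> A" "a2 \<in> A"
    using assms(5,6) unfolding set_mult_def by blast
  moreover have "w1 \<in> carrier G" "w2 \<in> carrier G" "a1 \<in> carrier G" "a2 \<in> carrier G"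
    using assms(1,2) xy by auto
  ultimately have "x \<otimes> inv y = w1 \<otimes> (a1 \<otimes> inv a2) \<otimes> inv w2"
    by (simp add: inv_mult_group m_assoc)
  also have "\<dots> \<in> U"
    using assms(3,4) xy by blast
  finally show ?thesis .
qed

lemma right_cauchy_min_right_cauchy_of:
  assumes S: "group_topology G S" and F: "right_cauchy G S F"
  shows "right_cauchy G S (min_right_cauchy_of G S F)"
  unfolding right_cauchy_def
proof (intro conjI allI impI)
  have FG: "eventually (\<lambda>x. x \<in> carrier G) F" and "F \<noteq> bot"
    using F by (auto simp: right_cauchy_def)
  then show "min_right_cauchy_of G S F \<noteq> bot"
    using le_min_right_cauchy_of[OF S FG] by (auto simp: bot_unique)
  have "openin S (carrier G)"
    using S openin_topspace[of S] by (simp add: group_topology_def)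
  then show "eventually (\<lambda>x. x \<in> carrier G) (min_right_cauchy_of G S F)"
    unfolding eventually_min_right_cauchy_of[OF S FG]
    using FG set_mult_closed[of "carrier G" "carrier G"] by (intro exI[of _ "carrier G"]) auto
  fix U assume U: "openin S U \<and> \<one> \<in> U"
  obtain W where W: "openin S W" "\<one> \<in> W"
      and WU: "\<And>a b c. \<lbrakk>a \<in> W; b \<in> W; c \<in> W\<rbrakk> \<Longrightarrow> a \<otimes> b \<otimes> inv c \<in> U"
    using U by (auto intro: nhds_one_mult_mult_inv[OF S])
  have WG: "W \<subseteq> carrier G"
    using openin_subset[OF W(1)] S by (simp add: group_topology_def)
  obtain A where A: "eventually (\<lambda>x. x \<in> A) F" and AW: "\<forall>x\<in>A. \<forall>y\<in>A. x \<otimes> inv y \<in> W"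
    using F W unfolding right_cauchy_def by meson
  let ?A = "W <#> (A \<inter> carrier G)"
  show "\<exists>A. eventually (\<lambda>x. x \<in> A) (min_right_cauchy_of G S F) \<and> (\<forall>x\<in>A. \<forall>y\<in>A. x \<otimes> inv y \<in> U)"
  proof (intro exI conjI ballI)
    have "eventually (\<lambda>x. x \<in> A \<inter> carrier G) F"
      using A FG by (simp add: eventually_conj_iff)
    then show "eventually (\<lambda>x. x \<in> ?A) (min_right_cauchy_of G S F)"
      unfolding eventually_min_right_cauchy_of[OF S FG] using W by blast
    show "x \<otimes> inv y \<in> U" if "x \<in> ?A" "y \<in> ?A" for x y
      by (rule set_mult_mult_inv_mem[OF WG _ WU _ that]) (use AW in auto)
  qed
qed

lemma ex1_min_right_cauchy_above:
  assumes "group_topology G S" "right_cauchy G S F"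
  shows "\<exists>!F'. min_right_cauchy G S F' \<and> F \<le> F'"
proof (rule ex1I)
  have le: "F \<le> min_right_cauchy_of G S F"
    using assms le_min_right_cauchy_of by (auto simp: right_cauchy_def)
  show "min_right_cauchy G S (min_right_cauchy_of G S F) \<and> F \<le> min_right_cauchy_of G S F"
    unfolding min_right_cauchy_def
    using assms le right_cauchy_min_right_cauchy_of right_cauchy_le_min_right_cauchy_of
    by (meson order.antisym order.trans)
  fix F' assume "min_right_cauchy G S F' \<and> F \<le> F'"
  then show "F' = min_right_cauchy_of G S F"
    using assms right_cauchy_min_right_cauchy_of right_cauchy_le_min_right_cauchy_of
    unfolding min_right_cauchy_def by blast
qed

lemma min_right_cauchy_compl_map:
  assumes "group_topology G S" "right_cauchy G S F"
  shows "min_right_cauchy G S (compl_map G S F) \<and> F \<le> compl_map G S F"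
  unfolding compl_map_def using ex1_min_right_cauchy_above[OF assms] by (rule theI')

lemma right_cauchy_subgroupD:
  assumes B: "subgroup B G" and F: "right_cauchy (G\<lparr>carrier := B\<rparr>) (subtopology Y B) F"
  shows "right_cauchy G Y F"
proof -
  have FB: "eventually (\<lambda>x. x \<in> B) F"
    using F by (simp add: right_cauchy_def)
  have "\<exists>A. eventually (\<lambda>x. x \<in> A) F \<and> (\<forall>x\<in>A. \<forall>y\<in>A. x \<otimes> inv y \<in> V)"
    if V: "openin Y V" "\<one> \<in> V" for V
  proof -
    have "openin (subtopology Y B) (V \<inter> B)"
      using V(1) by (auto simp: openin_subtopology)
    then obtain A where A: "eventually (\<lambda>x. x \<in> A) F"
        "\<forall>x\<in>A. \<forall>y\<in>A. x \<otimes>\<^bsub>G\<lparr>carrier := B\<rparr>\<^esub> inv\<^bsub>G\<lparr>carrier := B\<rparr>\<^esub> y \<in> V \<inter> B"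
      using F V(2) subgroup.one_closed[OF B] unfolding right_cauchy_def by auto
    have "x \<otimes> inv y \<in> V" if "x \<in> A \<inter> B" "y \<in> A \<inter> B" for x y
    proof -
      from A(2) that have "x \<otimes>\<^bsub>G\<lparr>carrier := B\<rparr>\<^esub> inv\<^bsub>G\<lparr>carrier := B\<rparr>\<^esub> y \<in> V"
        by blast
      with that show ?thesis by (simp add: m_inv_consistent[OF B])
    qed
    with A(1) FB show ?thesis
      by (intro exI[of _ "A \<inter> B"]) (auto simp: eventually_conj_iff)
  qed
  with F FB subgroup.subset[OF B] show ?thesis
    unfolding right_cauchy_def by (auto elim: eventually_mono)
qed

lemma right_cauchy_subgroupI:
  assumes B: "subgroup B G" and F: "right_cauchy G Y F" "eventually (\<lambda>x. x \<in> B) F"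
  shows "right_cauchy (G\<lparr>carrier := B\<rparr>) (subtopology Y B) F"
proof -
  have "\<exists>A. eventually (\<lambda>x. x \<in> A) F \<and>
        (\<forall>x\<in>A. \<forall>y\<in>A. x \<otimes>\<^bsub>G\<lparr>carrier := B\<rparr>\<^esub> inv\<^bsub>G\<lparr>carrier := B\<rparr>\<^esub> y \<in> U)"
    if U: "openin (subtopology Y B) U" "\<one> \<in> U" for U
  proof -
    obtain V where V: "openin Y V" "U = V \<inter> B"
      using U(1) by (auto simp: openin_subtopology)
    then obtain A where A: "eventually (\<lambda>x. x \<in> A) F" "\<forall>x\<in>A. \<forall>y\<in>A. x \<otimes> inv y \<in> V"
      using F U(2) unfolding right_cauchy_def by auto
    have "x \<otimes> inv y \<in> B" if "x \<in> B" "y \<in> B" for x y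
      using that B by (auto intro: subgroup.m_closed subgroup.m_inv_closed)
    then have "x \<otimes>\<^bsub>G\<lparr>carrier := B\<rparr>\<^esub> inv\<^bsub>G\<lparr>carrier := B\<rparr>\<^esub> y \<in> U" if "x \<in> A \<inter> B" "y \<in> A \<inter> B" for x y
      using A(2) that m_inv_consistent[OF B, of y] V(2) by auto
    with A(1) F show ?thesis
      by (intro exI[of _ "A \<inter> B"]) (auto simp: eventually_conj_iff)
  qed
  with F show ?thesis
    unfolding right_cauchy_def by auto
qed

lemma right_cauchy_subgroup_iff:
  assumes "subgroup B G"
  shows "right_cauchy (G\<lparr>carrier := B\<rparr>) (subtopology Y B) F \<longleftrightarrow>
    right_cauchy G Y F \<and> eventually (\<lambda>x. x \<in> B) F"
proof
  assume F: "right_cauchy (G\<lparr>carrier := B\<rparr>) (subtopology Y B) F"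
  then have "eventually (\<lambda>x. x \<in> B) F"
    by (simp add: right_cauchy_def)
  with right_cauchy_subgroupD[OF assms F] show "right_cauchy G Y F \<and> eventually (\<lambda>x. x \<in> B) F" ..
qed (use right_cauchy_subgroupI[OF assms] in blast)

lemma right_cauchy_eventually_open_subgroup:
  assumes "subgroup B G" "openin Y B" "right_cauchy G Y F'" "F \<le> F'" "F \<noteq> bot"
    and "eventually (\<lambda>x. x \<in> B) F"
  shows "eventually (\<lambda>x. x \<in> B) F'"
  using right_cauchy_eventually_set_mult[OF assms(3-6) assms(2)] subgroup_mult_id[OF assms(1)]
    subgroup.one_closed[OF assms(1)]
  by simp

lemma min_right_cauchy_subgroup_iff:
  assumes B: "subgroup B G" "openin Y B" and FB: "eventually (\<lambda>x. x \<in> B) F"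
  shows "min_right_cauchy (G\<lparr>carrier := B\<rparr>) (subtopology Y B) F \<longleftrightarrow> min_right_cauchy G Y F"
proof -
  have iff: "right_cauchy (G\<lparr>carrier := B\<rparr>) (subtopology Y B) F' \<longleftrightarrow> right_cauchy G Y F'"
    if "eventually (\<lambda>x. x \<in> B) F'" for F'
    using right_cauchy_subgroup_iff[OF B(1)] that by blast
  have "eventually (\<lambda>x. x \<in> B) F'" if "right_cauchy G Y F" "right_cauchy G Y F'" "F \<le> F'" for F'
    using right_cauchy_eventually_open_subgroup[OF B that(2,3) _ FB] that(1)
    by (simp add: right_cauchy_def)
  moreover have "right_cauchy G Y F'" if "right_cauchy (G\<lparr>carrier := B\<rparr>) (subtopology Y B) F'" for F'
    using right_cauchy_subgroup_iff[OF B(1)] that by blast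
  ultimately show ?thesis
    unfolding min_right_cauchy_def using iff FB by meson
qed

lemma compl_map_subgroup:
  assumes B: "subgroup B G" "openin Y B" and F: "right_cauchy G Y F" "eventually (\<lambda>x. x \<in> B) F"
  shows "compl_map (G\<lparr>carrier := B\<rparr>) (subtopology Y B) F = compl_map G Y F"
proof -
  have "F' \<in> {F'. eventually (\<lambda>x. x \<in> B) F'}"
    if "min_right_cauchy (G\<lparr>carrier := B\<rparr>) (subtopology Y B) F' \<or> min_right_cauchy G Y F'"
      "F \<le> F'" for F'
    using that right_cauchy_eventually_open_subgroup[OF B _ _ _ F(2)] F(1)
    by (auto simp: min_right_cauchy_def right_cauchy_def)
  then have "(\<lambda>F'. min_right_cauchy (G\<lparr>carrier := B\<rparr>) (subtopology Y B) F' \<and> F \<le> F') =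
             (\<lambda>F'. min_right_cauchy G Y F' \<and> F \<le> F')"
    using min_right_cauchy_subgroup_iff[OF B] by blast
  then show ?thesis
    by (simp add: compl_map_def)
qed

lemma ker_ext_id_open_subgroup:
  assumes S: "group_topology G S" and ST: "\<forall>U. openin S U \<longrightarrow> openin T U"
    and B: "subgroup B G" "openin S B"
  shows "ker_ext_id (G\<lparr>carrier := B\<rparr>) (subtopology T B) (subtopology S B) = ker_ext_id G T S"
proof -
  have BT: "openin T B" using ST B(2) by blast
  have one: "compl_one (G\<lparr>carrier := B\<rparr>) (subtopology S B) = compl_one G S"
    unfolding compl_one_def using nhdsin_open_subtopology[OF B(2) subgroup.one_closed[OF B(1)]]
    by simp
  have "F \<in> ker_ext_id (G\<lparr>carrier := B\<rparr>) (subtopology T B) (subtopology S B) \<longleftrightarrow>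
        F \<in> ker_ext_id G T S"
    if FB: "eventually (\<lambda>x. x \<in> B) F" for F
    using min_right_cauchy_subgroup_iff[OF B(1) BT FB] compl_map_subgroup[OF B _ FB] one
      right_cauchy_coarser_topology[OF _ ST]
    by (auto simp: ker_ext_id_def completion_def min_right_cauchy_def)
  moreover have "eventually (\<lambda>x. x \<in> B) F"
    if "F \<in> ker_ext_id (G\<lparr>carrier := B\<rparr>) (subtopology T B) (subtopology S B)" for F
    using that by (simp add: ker_ext_id_def completion_def min_right_cauchy_def right_cauchy_def)
  moreover have "eventually (\<lambda>x. x \<in> B) F" if F: "F \<in> ker_ext_id G T S" for F
  proof -
    have "right_cauchy G S F"
      using F right_cauchy_coarser_topology[OF _ ST]
      by (auto simp: ker_ext_id_def completion_def min_right_cauchy_def)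
    then have "F \<le> compl_map G S F"
      using min_right_cauchy_compl_map[OF S] by blast
    with F have "F \<le> nhdsin S \<one>"
      by (simp add: ker_ext_id_def compl_one_def)
    moreover have "eventually (\<lambda>x. x \<in> B) (nhdsin S \<one>)"
      using B subgroup.one_closed[OF B(1)] by (auto simp: eventually_nhdsin)
    ultimately show ?thesis by (rule filter_leD)
  qed
  ultimately show ?thesis by blast
qed

end

theorem corollary1p3:
  fixes G :: "('a, 'b) monoid_scheme" and B N :: "'a set" and \<T> \<S> :: "'a topology"
  assumes "group G"
    and "BN_pair G B N"
    and "group_topology G \<T>" and "group_topology G \<S>"
    and "\<forall>U. openin \<S> U \<longrightarrow> openin \<T> U"
    and "openin \<S> B"
  shows "ker_ext_id G \<T> \<S> =
         compl_map G \<T> ` ker_ext_id (G\<lparr>carrier := B\<rparr>) (subtopology \<T> B) (subtopology \<S> B)"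
proof -
  have "subgroup B G"
    using assms(2) by (simp add: BN_pair_def)
  then have "ker_ext_id (G\<lparr>carrier := B\<rparr>) (subtopology \<T> B) (subtopology \<S> B) = ker_ext_id G \<T> \<S>"
    using group.ker_ext_id_open_subgroup[OF assms(1,4,5) _ assms(6)] by blast
  moreover have "compl_map G \<T> F = F" if "F \<in> ker_ext_id G \<T> \<S>" for F
    using that compl_map_min_right_cauchy by (auto simp: ker_ext_id_def completion_def)
  ultimately show ?thesis by simp
qed

end
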